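(* Let $q=3^m$ with $m\ge1$, and for $b\in\mathbb{F}_{q^2}$ let $\delta(b)=\#\{u\in\mathbb{F}_{q^2}:\ 2u^{q+1}+u^2=b\}$. Then for every $b\in\mathbb{F}_{q^2}^*$, $\delta(b)=2$ if $\mathrm{Tr}_{\mathbb{F}_{q^2}/\mathbb{F}_q}(b)$ is a non-square in $\mathbb{F}_q$, and $\delta(b)=0$ if $\mathrm{Tr}_{\mathbb{F}_{q^2}/\mathbb{F}_q}(b)$ is a square in $\mathbb{F}_q$ (including $0$). Moreover, there are exactly $\frac{q^2+q-2}{2}$ elements $b\in\mathbb{F}_{q^2}^*$ with $\delta(b)=0$ and exactly $\frac{q^2-q}{2}$ elements $b\in\mathbb{F}_{q^2}^*$ with $\delta(b)=2$.
   Context: $\mathrm{Tr}_{\mathbb{F}_{q^2}/\mathbb{F}_q}(b)=b+b^q$. $\delta(b)$ equals $\delta_f(1,b+\tfrac14)$ for $f(x)=x^{q+2}$, where $\delta_f(a,b)=\#\{x\in\mathbb{F}_{q^2}: f(x+a)-f(x)=b\}$. *)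

theory Defs
  imports Main
begin

definition subfield_q :: "nat \<Rightarrow> 'a::field set" where
  "subfield_q q = {x. x ^ q = x}"

definition trace_q :: "nat \<Rightarrow> 'a::field \<Rightarrow> 'a" where
  "trace_q q b = b + b ^ q"

definition is_square_in :: "'a set \<Rightarrow> 'a::field \<Rightarrow> bool" where
  "is_square_in S t \<longleftrightarrow> (\<exists>y\<in>S. y ^ 2 = t)"

definition delta_q :: "nat \<Rightarrow> 'a::{field,finite} \<Rightarrow> nat" where
  "delta_q q b = card {u. 2 * u ^ (q + 1) + u ^ 2 = b}"

end

theory Submission
  imports Defs "HOL-Library.Cardinality" "HOL-Computational_Algebra.Primes"
    "HOL-Computational_Algebra.Polynomial"
begin

text \<open>In characteristic 3, 2 u^(q+1) + u^2 = u (u - u^q). For b \<noteq> 0, putting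
  s = u - u^q turns the solutions u bijectively into u = b / s, where s ranges over the nonzero
  square roots of Tr(b) with s^q = -s. Now Tr(b) lies in F_q, every element of F_q is a square
  in F_(q^2) (Euler's criterion), and a square root s of a nonzero t in F_q satisfies
  s^q = s or s^q = -s, the former exactly when t is a square in F_q. For the counts, the fibres of the map partition F_(q^2) and \<delta>(0) = #F_q = q,
  so 2 #{b \<noteq> 0. \<delta>(b) = 2} = q^2 - q.\<close>

lemma card_power_eq_le:
  fixes c :: "'a::idom"
  assumes "k > 0"
  shows "card {x. x ^ k = c} \<le> k"
proof -
  define p where "p = monom (1::'a) k + [:-c:]"
  have deg: "degree p = k"
    unfolding p_def using assms by (subst degree_add_eq_left) (auto simp: degree_monom_eq)
  then have "p \<noteq> 0" using assms by auto
  then have "card {x. poly p x = 0} \<le> k"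
    using card_poly_roots_bound deg by metis
  moreover have "{x. poly p x = 0} = {x. x ^ k = c}"
    by (auto simp: p_def poly_monom)
  ultimately show ?thesis by simp
qed

lemma card_le_mult_card_image:
  assumes "finite A" and "\<And>c. card {x\<in>A. f x = c} \<le> k"
  shows "card A \<le> k * card (f ` A)"
proof -
  have "A = (\<Union>c\<in>f ` A. {x\<in>A. f x = c})" by auto
  then have "card A \<le> (\<Sum>c\<in>f ` A. card {x\<in>A. f x = c})"
    by (metis card_UN_le assms(1) finite_imageI)
  also have "\<dots> \<le> (\<Sum>c\<in>f ` A. k)"
    by (rule sum_mono) (use assms in auto)
  finally show ?thesis by (simp add: mult.commute)
qed

lemma of_nat_card_UNIV_eq_0: "of_nat (card (UNIV :: 'a::{ring_1,finite} set)) = (0::'a)"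
proof -
  have "(\<Sum>y\<in>UNIV. y) = (\<Sum>y\<in>UNIV. y + (1::'a))"
    by (rule sum.reindex_bij_witness[of _ "\<lambda>y. y + 1" "\<lambda>y. y - 1"]) auto
  also have "\<dots> = (\<Sum>y\<in>UNIV. y) + of_nat CARD('a)"
    by (simp add: sum.distrib)
  finally show ?thesis by simp
qed

lemma prime_CHAR_finite_field: "prime CHAR('a::{field,finite})"
  by (rule prime_CHAR_semidom) (simp add: finite_imp_CHAR_pos)

lemma CHAR_eq_if_card_UNIV_eq_prime_power:
  assumes "CARD('a::{field,finite}) = p ^ k" and "prime p"
  shows "CHAR('a) = p"
proof -
  have "CHAR('a) dvd p ^ k"
    using of_nat_card_UNIV_eq_0[where 'a='a] by (simp only: of_nat_eq_0_iff_char_dvd assms(1))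
  then have "CHAR('a) dvd p" by (rule prime_dvd_power[OF prime_CHAR_finite_field])
  then show ?thesis by (rule primes_dvd_imp_eq[OF prime_CHAR_finite_field assms(2)])
qed

lemma card_nonzero_field: "card {x::'a::{field,finite}. x \<noteq> 0} = CARD('a) - 1"
proof -
  have "{x::'a. x \<noteq> 0} = UNIV - {0}" by auto
  then show ?thesis by (simp add: card_Diff_subset)
qed

lemma card_field_ge_2: "CARD('a::{field,finite}) \<ge> 2"
  using card_mono[of UNIV "{0, 1::'a}"] by simp

lemma power_card_UNIV_minus_one:
  fixes x :: "'a::{field,finite}"
  assumes "x \<noteq> 0"
  shows "x ^ (CARD('a) - 1) = 1"
proof -
  let ?A = "{y::'a. y \<noteq> 0}"
  have "(\<Prod>y\<in>?A. y) = (\<Prod>y\<in>?A. x * y)"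
    by (rule prod.reindex_bij_witness[of _ "\<lambda>y. x * y" "\<lambda>y. y / x"]) (use assms in auto)
  also have "\<dots> = x ^ (CARD('a) - 1) * (\<Prod>y\<in>?A. y)"
    by (simp add: prod.distrib card_nonzero_field)
  finally show ?thesis by simp
qed

lemma power_card_UNIV_eq_same: "(x::'a::{field,finite}) ^ CARD('a) = x"
proof (cases "x = 0")
  case False
  have "x ^ CARD('a) = x * x ^ (CARD('a) - 1)"
    using card_field_ge_2[where 'a='a] by (simp flip: power_Suc)
  then show ?thesis using power_card_UNIV_minus_one[OF False] by simp
qed simp

text \<open>In a finite field of order \<open>d k + 1\<close>, the \<open>d\<close>-th powers of the
  units are exactly the \<open>k\<close>-th roots of unity: they are among them by Fermat, there are at
  least \<open>k\<close> of them since every fibre has at most \<open>d\<close> elements, and there are at most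
  \<open>k\<close> roots of unity.\<close>

lemma card_image_power_nonzero_ge:
  assumes "d * k = CARD('a::{field,finite}) - 1"
  shows "k \<le> card ((\<lambda>x. x ^ d) ` {x::'a. x \<noteq> 0})"
proof -
  have "d > 0" using assms card_field_ge_2[where 'a='a] by (cases d) auto
  have "d * k \<le> d * card ((\<lambda>x. x ^ d) ` {x::'a. x \<noteq> 0})"
  proof (unfold assms, subst card_nonzero_field[symmetric], rule card_le_mult_card_image)
    fix c :: 'a
    have "card {x \<in> {x::'a. x \<noteq> 0}. x ^ d = c} \<le> card {x::'a. x ^ d = c}"
      by (rule card_mono) auto
    also have "\<dots> \<le> d" by (rule card_power_eq_le[OF \<open>d > 0\<close>])
    finally show "card {x \<in> {x::'a. x \<noteq> 0}. x ^ d = c} \<le> d" .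
  qed simp
  then show ?thesis using \<open>d > 0\<close> by simp
qed

lemma image_power_nonzero_eq_roots_of_unity:
  assumes dk: "d * k = CARD('a::{field,finite}) - 1"
  shows "(\<lambda>x. x ^ d) ` {x::'a. x \<noteq> 0} = {x. x ^ k = 1}"
proof (rule card_subset_eq)
  show sub: "(\<lambda>x. x ^ d) ` {x::'a. x \<noteq> 0} \<subseteq> {x. x ^ k = 1}"
    using power_card_UNIV_minus_one by (auto simp flip: power_mult simp: dk)
  have "k > 0" using dk card_field_ge_2[where 'a='a] by (cases k) auto
  then show "card ((\<lambda>x. x ^ d) ` {x::'a. x \<noteq> 0}) = card {x::'a. x ^ k = 1}"
    using card_power_eq_le[of k "1::'a"] card_image_power_nonzero_ge[OF dk] card_mono[OF _ sub]
    by simp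
qed simp

lemma card_roots_of_unity:
  assumes dk: "d * k = CARD('a::{field,finite}) - 1"
  shows "card {x::'a. x ^ k = 1} = k"
proof (rule antisym)
  have "k > 0" using dk card_field_ge_2[where 'a='a] by (cases k) auto
  then show "card {x::'a. x ^ k = 1} \<le> k" by (rule card_power_eq_le)
  show "k \<le> card {x::'a. x ^ k = 1}"
    using card_image_power_nonzero_ge[OF dk]
    by (simp add: image_power_nonzero_eq_roots_of_unity[OF dk])
qed

lemma exists_square_root_if_power_half_eq_1:
  fixes x :: "'a::{field,finite}"
  assumes "odd CARD('a)" and "x ^ ((CARD('a) - 1) div 2) = 1"
  shows "\<exists>y. y ^ 2 = x"
proof -
  have "2 * ((CARD('a) - 1) div 2) = CARD('a) - 1" using assms(1) by simp
  then have "x \<in> (\<lambda>y. y ^ 2) ` {y::'a. y \<noteq> 0}"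
    using image_power_nonzero_eq_roots_of_unity assms(2) by blast
  then show ?thesis by auto
qed

context
  fixes q n :: nat
  assumes card_UNIV_eq_square: "CARD('a::{field,finite}) = q ^ 2"
    and q_eq_CHAR_power: "q = CHAR('a) ^ n"
begin

lemma q_ge_2: "q \<ge> 2"
proof (rule ccontr)
  assume "\<not> q \<ge> 2"
  then have "q = 0 \<or> q = 1" by auto
  then show False using card_field_ge_2[where 'a='a] card_UNIV_eq_square by auto
qed

lemma frobenius_add: "((x::'a) + y) ^ q = x ^ q + y ^ q"
  by (rule freshmans_dream'[OF prime_CHAR_finite_field q_eq_CHAR_power])

lemma frobenius_minus: "(- (x::'a)) ^ q = - (x ^ q)"
proof -
  have "(- x) ^ q + x ^ q = 0"
    using q_ge_2 by (simp flip: frobenius_add)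
  then show ?thesis by (simp add: eq_neg_iff_add_eq_0)
qed

lemma frobenius_diff: "((x::'a) - y) ^ q = x ^ q - y ^ q"
  using frobenius_add[of x "- y"] by (simp add: frobenius_minus)

lemma frobenius_frobenius: "((x::'a) ^ q) ^ q = x"
  using power_card_UNIV_eq_same[of x] card_UNIV_eq_square
  by (simp add: power2_eq_square flip: power_mult)

lemma trace_q_frobenius: "trace_q q (b::'a) ^ q = trace_q q b"
  unfolding trace_q_def by (simp add: frobenius_add frobenius_frobenius add.commute)

lemma card_frobenius_fixed: "card {x::'a. x ^ q = x} = q"
proof -
  have "(q + 1) * (q - 1) = CARD('a) - 1"
    using q_ge_2 card_UNIV_eq_square by (simp add: power2_eq_square algebra_simps)
  then have units: "card {x::'a. x ^ (q - 1) = 1} = q - 1"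
    by (rule card_roots_of_unity)
  have "{x::'a. x ^ q = x} = insert 0 {x. x ^ (q - 1) = 1}"
  proof -
    have "x ^ q = x ^ (q - 1) * x" for x :: 'a
      using q_ge_2 by (simp flip: power_Suc2)
    then show ?thesis using q_ge_2 by auto
  qed
  moreover have "(0::'a) \<notin> {x. x ^ (q - 1) = 1}" using q_ge_2 by (simp add: zero_power)
  ultimately show ?thesis using units q_ge_2 by simp
qed

lemma exists_square_root_if_frobenius_fixed:
  assumes "odd q" and "(t::'a) ^ q = t" and "t \<noteq> 0"
  shows "\<exists>s. s ^ 2 = t"
proof (rule exists_square_root_if_power_half_eq_1)
  show "odd CARD('a)" using assms(1) card_UNIV_eq_square by simp
  have "t ^ (q - 1) * t = t"
    using assms(2) q_ge_2 by (simp flip: power_Suc2)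
  then have "t ^ (q - 1) = 1" using assms(3) by simp
  obtain j where "q = 2 * j + 1" using assms(1) oddE by blast
  then have "(CARD('a) - 1) div 2 = (q - 1) * (j + 1)"
    using card_UNIV_eq_square by (simp add: power2_eq_square algebra_simps)
  with \<open>t ^ (q - 1) = 1\<close> show "t ^ ((CARD('a) - 1) div 2) = 1"
    by (simp only: power_mult power_one)
qed

context
  assumes CHAR_eq_3: "CHAR('a) = 3"
begin

lemma two_eq_minus_one: "(2::'a) = - 1"
proof -
  have "(3::'a) = 0" using of_nat_CHAR[where 'a='a] CHAR_eq_3 by simp
  then have "(2::'a) + 1 = 0" by simp
  then show ?thesis by (simp add: eq_neg_iff_add_eq_0)
qed

lemma self_eq_minus_imp_zero: "(x::'a) = - x \<Longrightarrow> x = 0"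
  by (metis mult_minus1 two_eq_minus_one mult_2 add_eq_0_iff2)

lemma odd_q: "odd q"
  using q_eq_CHAR_power CHAR_eq_3 by simp

lemma delta_polynomial_factorization: "2 * (u::'a) ^ (q + 1) + u ^ 2 = u * (u - u ^ q)"
  by (simp add: two_eq_minus_one power2_eq_square algebra_simps)

lemma delta_solutions_eq_image:
  assumes "(b::'a) \<noteq> 0"
  shows "{u. 2 * u ^ (q + 1) + u ^ 2 = b} =
    (\<lambda>s. b / s) ` {s. s \<noteq> 0 \<and> s ^ 2 = trace_q q b \<and> s ^ q = - s}"
proof (intro equalityI subsetI)
  fix u assume "u \<in> {u. 2 * u ^ (q + 1) + u ^ 2 = b}"
  then have us: "u * (u - u ^ q) = b" by (simp only: delta_polynomial_factorization mem_Collect_eq)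
  define s where "s = u - u ^ q"
  have "s \<noteq> 0" using us assms s_def by auto
  have anti: "s ^ q = - s" unfolding s_def by (simp add: frobenius_diff frobenius_frobenius)
  have "trace_q q b = u * s + (u * s) ^ q" unfolding trace_q_def using us s_def by simp
  also have "\<dots> = u * s - u ^ q * s" by (simp add: power_mult_distrib anti)
  also have "\<dots> = s ^ 2" by (simp add: s_def power2_eq_square algebra_simps)
  finally have "s ^ 2 = trace_q q b" ..
  moreover have "u = b / s" using us \<open>s \<noteq> 0\<close> by (simp add: s_def field_simps)
  ultimately show "u \<in> (\<lambda>s. b / s) ` {s. s \<noteq> 0 \<and> s ^ 2 = trace_q q b \<and> s ^ q = - s}"
    using \<open>s \<noteq> 0\<close> anti by blast
next
  fix u assume "u \<in> (\<lambda>s. b / s) ` {s. s \<noteq> 0 \<and> s ^ 2 = trace_q q b \<and> s ^ q = - s}"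
  then obtain s where s: "s \<noteq> 0" "s ^ 2 = trace_q q b" "s ^ q = - s" and u: "u = b / s"
    by auto
  have "u - u ^ q = trace_q q b / s"
    using u s(3) by (simp add: trace_q_def power_divide add_divide_distrib)
  also have "\<dots> = s" using s(1,2) by (simp flip: s(2) add: power2_eq_square)
  finally have "u * (u - u ^ q) = b" using u s(1) by simp
  then show "u \<in> {u. 2 * u ^ (q + 1) + u ^ 2 = b}"
    by (simp only: delta_polynomial_factorization mem_Collect_eq)
qed

lemma delta_q_eq_card_antifixed_square_roots:
  assumes "(b::'a) \<noteq> 0"
  shows "delta_q q b = card {s. s \<noteq> 0 \<and> s ^ 2 = trace_q q b \<and> s ^ q = - s}"
proof -
  have "inj_on (\<lambda>s. b / s) {s. s \<noteq> 0 \<and> s ^ 2 = trace_q q b \<and> s ^ q = - s}"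
    using assms by (auto simp: inj_on_def field_simps)
  then show ?thesis
    unfolding delta_q_def delta_solutions_eq_image[OF assms] by (rule card_image)
qed

lemma delta_q_eq_0_if_square:
  assumes "(b::'a) \<noteq> 0" and "is_square_in (subfield_q q) (trace_q q b)"
  shows "delta_q q b = 0"
proof -
  obtain y where y: "y ^ q = y" "y ^ 2 = trace_q q b"
    using assms(2) unfolding is_square_in_def subfield_q_def by auto
  have "s = 0" if "s ^ 2 = trace_q q b" "s ^ q = - s" for s
  proof -
    have "s = y \<or> s = - y" using that(1) y(2) power2_eq_iff by metis
    then have "s ^ q = s" using y(1) by (auto simp: frobenius_minus)
    then show "s = 0" using that(2) self_eq_minus_imp_zero by metis
  qed
  then show ?thesis
    unfolding delta_q_eq_card_antifixed_square_roots[OF assms(1)] by auto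
qed

lemma delta_q_eq_2_if_not_square:
  assumes "(b::'a) \<noteq> 0" and not_square: "\<not> is_square_in (subfield_q q) (trace_q q b)"
  shows "delta_q q b = 2"
proof -
  define t where "t = trace_q q b"
  have "t \<noteq> 0"
  proof
    assume "t = 0"
    then have "is_square_in (subfield_q q) (trace_q q b)"
      using q_ge_2 unfolding t_def is_square_in_def subfield_q_def
      by (auto intro!: bexI[of _ 0] simp: zero_power)
    then show False using not_square by simp
  qed
  obtain s0 where s0: "s0 ^ 2 = t"
    using exists_square_root_if_frobenius_fixed[OF odd_q _ \<open>t \<noteq> 0\<close>] trace_q_frobenius t_def
    by blast
  have antifixed: "s \<noteq> 0 \<and> s ^ q = - s" if "s ^ 2 = t" for s
  proof
    show "s \<noteq> 0" using that \<open>t \<noteq> 0\<close> by auto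
    have "(s ^ q) ^ 2 = (s ^ 2) ^ q" by (simp flip: power_mult add: mult.commute)
    then have "(s ^ q) ^ 2 = s ^ 2" using that trace_q_frobenius by (simp add: t_def)
    moreover have "s ^ q \<noteq> s"
      using not_square that unfolding is_square_in_def subfield_q_def t_def by auto
    ultimately show "s ^ q = - s" using power2_eq_iff by blast
  qed
  have "{s. s \<noteq> 0 \<and> s ^ 2 = t \<and> s ^ q = - s} = {s0, - s0}"
    using antifixed s0 power2_eq_iff[of _ s0] by auto
  moreover have "s0 \<noteq> - s0" using antifixed[OF s0] self_eq_minus_imp_zero by blast
  ultimately show ?thesis
    unfolding delta_q_eq_card_antifixed_square_roots[OF assms(1)] t_def by simp
qed

lemma delta_q_zero: "delta_q q (0::'a) = q"
proof -
  have "{u::'a. 2 * u ^ (q + 1) + u ^ 2 = 0} = {u. u ^ q = u}"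
    unfolding delta_polynomial_factorization using q_ge_2 by (auto simp: zero_power)
  then show ?thesis unfolding delta_q_def by (simp add: card_frobenius_fixed)
qed

lemma sum_delta_q: "(\<Sum>b\<in>UNIV. delta_q q (b::'a)) = q ^ 2"
proof -
  have "(\<Sum>b\<in>UNIV. delta_q q (b::'a)) = card (\<Union>b. {u::'a. 2 * u ^ (q + 1) + u ^ 2 = b})"
    unfolding delta_q_def by (rule card_UN_disjoint[symmetric]) auto
  also have "(\<Union>b. {u::'a. 2 * u ^ (q + 1) + u ^ 2 = b}) = UNIV" by auto
  finally show ?thesis by (simp add: card_UNIV_eq_square)
qed

lemma delta_q_nonzero_cases: "(b::'a) \<noteq> 0 \<Longrightarrow> delta_q q b = 0 \<or> delta_q q b = 2"
  using delta_q_eq_0_if_square delta_q_eq_2_if_not_square by blast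

lemma two_mul_card_delta_q_eq_2: "2 * card {b::'a. b \<noteq> 0 \<and> delta_q q b = 2} = q ^ 2 - q"
proof -
  let ?B = "{b::'a. b \<noteq> 0 \<and> delta_q q b = 2}"
  have "q ^ 2 = delta_q q (0::'a) + (\<Sum>b\<in>UNIV - {0::'a}. delta_q q b)"
    using sum.remove[of "UNIV::'a set" 0 "delta_q q"] sum_delta_q by simp
  also have "(\<Sum>b\<in>UNIV - {0::'a}. delta_q q b) = (\<Sum>b\<in>?B. delta_q q b)"
    by (rule sum.mono_neutral_right) (auto dest: delta_q_nonzero_cases)
  also have "\<dots> = 2 * card ?B" by simp
  finally show ?thesis by (simp add: delta_q_zero)
qed

lemma card_delta_q_eq_2: "card {b::'a. b \<noteq> 0 \<and> delta_q q b = 2} = (q ^ 2 - q) div 2"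
  by (simp flip: two_mul_card_delta_q_eq_2)

lemma card_delta_q_eq_0: "card {b::'a. b \<noteq> 0 \<and> delta_q q b = 0} = (q ^ 2 + q - 2) div 2"
proof -
  let ?B0 = "{b::'a. b \<noteq> 0 \<and> delta_q q b = 0}" and ?B2 = "{b::'a. b \<noteq> 0 \<and> delta_q q b = 2}"
  have "{b::'a. b \<noteq> 0} = ?B0 \<union> ?B2" using delta_q_nonzero_cases by auto
  moreover have "card (?B0 \<union> ?B2) = card ?B0 + card ?B2" by (rule card_Un_disjoint) auto
  ultimately have "q ^ 2 - 1 = card ?B0 + card ?B2"
    using card_nonzero_field[where 'a='a] card_UNIV_eq_square by simp
  moreover have "q \<le> q ^ 2" by (simp add: power2_eq_square)
  ultimately have "q ^ 2 + q - 2 = 2 * card ?B0"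
    using two_mul_card_delta_q_eq_2 q_ge_2 by linarith
  then show ?thesis by simp
qed

end

end

theorem proposition4:
  fixes m :: nat
  assumes "m \<ge> 1"
    and "card (UNIV :: 'a::{field,finite} set) = 3 ^ (2 * m)"
  defines "q \<equiv> (3::nat) ^ m"
  shows "(\<forall>b::'a. b \<noteq> 0 \<longrightarrow>
            (\<not> is_square_in (subfield_q q) (trace_q q b) \<longrightarrow> delta_q q b = 2) \<and>
            (is_square_in (subfield_q q) (trace_q q b) \<longrightarrow> delta_q q b = 0))
       \<and> card {b::'a. b \<noteq> 0 \<and> delta_q q b = 0} = (q ^ 2 + q - 2) div 2
       \<and> card {b::'a. b \<noteq> 0 \<and> delta_q q b = 2} = (q ^ 2 - q) div 2"
proof -
  have CHAR_eq_3: "CHAR('a) = 3"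
    using assms(2) by (rule CHAR_eq_if_card_UNIV_eq_prime_power) simp
  have card_eq: "CARD('a) = q ^ 2"
    using assms(2) by (simp add: q_def power_mult mult.commute)
  have q_eq: "q = CHAR('a) ^ m" by (simp add: q_def CHAR_eq_3)
  show ?thesis
    using delta_q_eq_0_if_square[OF card_eq q_eq CHAR_eq_3]
      delta_q_eq_2_if_not_square[OF card_eq q_eq CHAR_eq_3]
      card_delta_q_eq_0[OF card_eq q_eq CHAR_eq_3] card_delta_q_eq_2[OF card_eq q_eq CHAR_eq_3]
    by blast
qed

end
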